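(* Let $\mathcal{H}$ be a real Hilbert space, $\lambda>0$, and $F:\mathcal{H}\to\mathbb{R}\cup\{+\infty\}$ convex, proper and lower semicontinuous with $\arg\min F\neq\emptyset$, and let $F_\lambda$ be its Moreau envelope. Then: (1) if $F$ satisfies the nonsmooth Polyak–Łojasiewicz condition (ns-PL) with parameter $\mu>0$, then $F_\lambda$ satisfies the Polyak–Łojasiewicz condition (PL) with parameter $\frac{\mu}{\lambda\mu+1}$; (2) if $F_\lambda$ satisfies (PL) with parameter $\mu>0$, then $F$ satisfies (ns-PL) with parameter $\frac{\mu}{4}$.
   Context: Moreau envelope: $F_\lambda(x)=\min_{y\in\mathcal{H}}\{F(y)+\frac{1}{2\lambda}\|y-x\|^2\}$; proximal operator $\mathrm{prox}_{\lambda F}(x)=\arg\min_{y}\{F(y)+\frac{1}{2\lambda}\|y-x\|^2\}$. $F_\lambda$ is convex, differentiable with $\frac1\lambda$-Lipschitz gradient, $\min F_\lambda=\min F=:F_*$ and $\arg\min F_\lambda=\arg\min F$. (PL) with parameter $\mu$ for a differentiable $G$ with $\arg\min G\ne\emptyset$: $G(x)-\min G\le\frac1{2\mu}\|\nabla G(x)\|^2$ for all $x$. (ns-PL) with parameter $\mu$: $F(x)-F_*\le \frac{1}{2\mu}\,\mathrm{dist}(0,\partial F(x))^2$ for all $x\in\mathcal{H}$, where $\partial F$ is the convex subdifferential and $\mathrm{dist}(0,\emptyset)=+\infty$. *)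

theory Defs
  imports "HOL-Analysis.Analysis"
begin

definition proper_fun :: "('a \<Rightarrow> ereal) \<Rightarrow> bool" where
  "proper_fun F \<longleftrightarrow> (\<forall>x. F x \<noteq> -\<infinity>) \<and> (\<exists>x. F x \<noteq> \<infinity>)"

definition convex_fun :: "('a::real_vector \<Rightarrow> ereal) \<Rightarrow> bool" where
  "convex_fun F \<longleftrightarrow> (\<forall>x y t. 0 \<le> t \<and> t \<le> 1 \<longrightarrow>
      F ((1 - t) *\<^sub>R x + t *\<^sub>R y) \<le> ereal (1 - t) * F x + ereal t * F y)"

definition lsc_fun :: "('a::topological_space \<Rightarrow> ereal) \<Rightarrow> bool" where
  "lsc_fun F \<longleftrightarrow> (\<forall>x. F x \<le> Liminf (at x) F)"

definition subdiff :: "('a::real_inner \<Rightarrow> ereal) \<Rightarrow> 'a \<Rightarrow> 'a set" where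
  "subdiff F x = {v. F x \<noteq> \<infinity> \<and> (\<forall>y. F x + ereal (v \<bullet> (y - x)) \<le> F y)}"

text \<open>Moreau envelope (real-valued for proper lsc convex F).\<close>
definition moreau_env :: "('a::real_normed_vector \<Rightarrow> ereal) \<Rightarrow> real \<Rightarrow> 'a \<Rightarrow> real" where
  "moreau_env F lam x = real_of_ereal (INF y. F y + ereal (norm (y - x) ^ 2 / (2 * lam)))"

definition dist0_sq :: "'a::real_normed_vector set \<Rightarrow> ereal" where
  "dist0_sq S = (if S = {} then \<infinity> else ereal ((infdist 0 S)\<^sup>2))"

definition PL :: "('a::real_inner \<Rightarrow> real) \<Rightarrow> real \<Rightarrow> bool" where
  "PL G mu \<longleftrightarrow> (\<forall>x. G differentiable (at x)) \<and> (\<exists>z. \<forall>x. G z \<le> G x) \<and>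
     (\<forall>x g. (G has_derivative (\<lambda>h. g \<bullet> h)) (at x) \<longrightarrow>
        G x - (INF y. G y) \<le> norm g ^ 2 / (2 * mu))"

definition nsPL :: "('a::real_inner \<Rightarrow> ereal) \<Rightarrow> real \<Rightarrow> bool" where
  "nsPL F mu \<longleftrightarrow> (\<forall>x. F x - (INF y. F y) \<le> dist0_sq (subdiff F x) / ereal (2 * mu))"

end

theory Submission
  imports Defs
begin

text \<open>
  For every \<open>x\<close> the proximal problem \<open>min\<^sub>y F y + \<parallel>y - x\<parallel>\<^sup>2 / (2\<lambda>)\<close> has a solution \<open>p\<close>:
  minimizing sequences are Cauchy by the parallelogram law and convexity, and lower
  semicontinuity passes to the limit. Its optimality condition is \<open>g = (x - p) / \<lambda> \<in> \<partial>F(p)\<close>,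
  which yields \<open>F\<^sub>\<lambda>(x) = F(p) + \<lambda>\<parallel>g\<parallel>\<^sup>2/2\<close> and, by monotonicity of \<open>\<partial>F\<close>, the bound
  \<open>\<bar>F\<^sub>\<lambda>(y) - F\<^sub>\<lambda>(x) - g \<bullet> (y - x)\<bar> \<le> \<parallel>y - x\<parallel>\<^sup>2/(2\<lambda>)\<close>; hence \<open>\<nabla>F\<^sub>\<lambda>(x) = g\<close>, and
  \<open>min F\<^sub>\<lambda> = min F\<close>.
  (1) \<open>F\<^sub>\<lambda>(x) - F\<^sub>* = F(p) - F\<^sub>* + \<lambda>\<parallel>g\<parallel>\<^sup>2/2 \<le> (1/(2\<mu>) + \<lambda>/2) \<parallel>g\<parallel>\<^sup>2\<close> by (ns-PL) at \<open>p\<close>.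
  (2) For \<open>v \<in> \<partial>F(x)\<close> the point \<open>x\<close> is the proximal point of \<open>y = x + \<lambda>v\<close>, where
  \<open>\<nabla>F\<^sub>\<lambda>(y) = v\<close>, so \<open>F(x) - F\<^sub>* \<le> F\<^sub>\<lambda>(y) - F\<^sub>* \<le> \<parallel>v\<parallel>\<^sup>2/(2\<mu>)\<close>: this even gives (ns-PL)
  with parameter \<open>\<mu>\<close>, which implies the claimed \<open>\<mu>/4\<close>.
\<close>

lemma norm_add_power2:
  fixes a b :: "'a::real_inner"
  shows "norm (a + b)^2 = norm a^2 + 2 * (a \<bullet> b) + norm b^2"
  by (simp add: power2_norm_eq_inner inner_add_left inner_add_right inner_commute)

lemma norm_midpoint_diff_power2:
  fixes a b x :: "'a::real_inner"
  shows "norm ((1/2) *\<^sub>R (a + b) - x)^2 = (norm (a - x)^2 + norm (b - x)^2) / 2 - norm (a - b)^2 / 4"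
proof -
  have "(1/2) *\<^sub>R (a + b) - x = (1/2) *\<^sub>R ((a - x) + (b - x))"
    by (metis add_diff_add scaleR_half_double scaleR_right_diff_distrib)
  moreover have "a - b = (a - x) - (b - x)" by simp
  ultimately show ?thesis
    by (simp add: power2_norm_eq_inner inner_add_left inner_add_right inner_diff_left
        inner_diff_right inner_commute field_simps)
qed

lemma le_of_forall_le_add_small_multiple:
  fixes a b c :: real
  assumes "\<And>t. 0 < t \<Longrightarrow> t \<le> 1 \<Longrightarrow> a \<le> b + t * c"
  shows "a \<le> b"
proof (rule field_le_epsilon)
  fix e :: real assume "0 < e"
  define t where "t = min 1 (e / (\<bar>c\<bar> + 1))"
  have t: "0 < t" "t \<le> 1" using \<open>0 < e\<close> by (auto simp: t_def)
  have "t * c \<le> e / (\<bar>c\<bar> + 1) * (\<bar>c\<bar> + 1)"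
    using t by (intro order.trans[OF mult_left_mono[OF abs_ge_self] mult_mono]) (auto simp: t_def)
  then have "t * c \<le> e" by simp
  then show "a \<le> b + e" using assms[OF t] by simp
qed

lemma lsc_fun_le_lim:
  assumes "lsc_fun F" and a: "a \<longlonglongrightarrow> p" and ab: "\<And>n. F (a n) \<le> ereal (b n)" and b: "b \<longlonglongrightarrow> \<beta>"
  shows "F p \<le> ereal \<beta>"
proof (rule ccontr)
  assume "\<not> F p \<le> ereal \<beta>"
  then have "ereal \<beta> < F p" by simp
  then obtain c where c: "ereal \<beta> < ereal c" "ereal c < F p" using ereal_dense2 by blast
  have "F p \<le> Liminf (at p) F" using \<open>lsc_fun F\<close> by (auto simp: lsc_fun_def)
  then have "eventually (\<lambda>y. ereal c < F y) (nhds p)"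
    using c(2) by (simp add: le_Liminf_iff eventually_nhds_conv_at)
  then have "eventually (\<lambda>n. ereal c < F (a n)) sequentially"
    using a by (rule eventually_compose_filterlim)
  moreover have "eventually (\<lambda>n. b n < c) sequentially" using b c(1) order_tendstoD(2) by auto
  ultimately have "eventually (\<lambda>n. False) sequentially"
  proof eventually_elim
    case (elim n)
    have "ereal c < ereal (b n)" using elim(1) ab[of n] by (rule less_le_trans)
    then show ?case using elim(2) by simp
  qed
  then show False by simp
qed

lemma subdiff_monotone:
  assumes "\<And>x. F x \<noteq> -\<infinity>" and "u \<in> subdiff F p" and "v \<in> subdiff F q"
  shows "0 \<le> (u - v) \<bullet> (p - q)"
proof -
  obtain a b where a: "F p = ereal a" and b: "F q = ereal b"
    using assms by (cases "F p"; cases "F q") (auto simp: subdiff_def)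
  have "F p + ereal (u \<bullet> (q - p)) \<le> F q" "F q + ereal (v \<bullet> (p - q)) \<le> F p"
    using assms(2,3) by (simp_all add: subdiff_def)
  then have "a + u \<bullet> (q - p) \<le> b" "b + v \<bullet> (p - q) \<le> a" using a b by simp_all
  moreover have "u \<bullet> (q - p) = - (u \<bullet> (p - q))"
    by (metis inner_minus_right minus_diff_eq)
  ultimately show ?thesis by (simp add: inner_diff_left)
qed

lemma has_derivative_inner_of_quadratic_bound:
  fixes f :: "'a::real_inner \<Rightarrow> real"
  assumes bound: "\<And>y. \<bar>f y - f x - g \<bullet> (y - x)\<bar> \<le> C * norm (y - x)^2"
  shows "(f has_derivative (\<lambda>h. g \<bullet> h)) (at x)"
  unfolding has_derivative_iff_norm
proof (intro conjI bounded_linear_inner_right)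
  have le: "norm (norm (f y - f x - g \<bullet> (y - x)) / norm (y - x)) \<le> C * norm (y - x)" for y
  proof (cases "y = x")
    case False
    then have "\<bar>f y - f x - g \<bullet> (y - x)\<bar> / norm (y - x) \<le> C * norm (y - x)^2 / norm (y - x)"
      by (intro divide_right_mono bound) simp
    then show ?thesis using False by (simp add: power2_eq_square)
  qed simp
  have "((\<lambda>y. C * norm (y - x)) \<longlongrightarrow> 0) (at x)"
    by (intro tendsto_mult_right_zero tendsto_norm_zero LIM_zero tendsto_ident_at)
  then show "((\<lambda>y. norm (f y - f x - g \<bullet> (y - x)) / norm (y - x)) \<longlongrightarrow> 0) (at x)"
    by (rule Lim_null_comparison[OF always_eventually[OF allI[OF le]]])
qed

lemma has_derivative_inner_unique:
  assumes "(f has_derivative (\<lambda>h. g \<bullet> h)) (at x)" "(f has_derivative (\<lambda>h. g' \<bullet> h)) (at x)"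
  shows "g = g'"
proof -
  have "(\<lambda>h. g \<bullet> h) = (\<lambda>h. g' \<bullet> h)" using has_derivative_unique[OF assms] .
  then have "(g - g') \<bullet> (g - g') = 0" by (metis inner_diff_left diff_self)
  then show ?thesis by simp
qed

lemma le_infdist_power2:
  assumes "A \<noteq> {}" and "\<And>a. a \<in> A \<Longrightarrow> c \<le> dist x a ^ 2"
  shows "c \<le> infdist x A ^ 2"
proof (cases "c \<le> 0")
  case False
  have "sqrt c \<le> infdist x A"
    unfolding infdist_notempty[OF assms(1)]
  proof (rule cINF_greatest[OF assms(1)])
    fix a assume "a \<in> A"
    then show "sqrt c \<le> dist x a" using assms(2) real_le_lsqrt by force
  qed
  then have "sqrt c ^ 2 \<le> infdist x A ^ 2" using False by (intro power_mono) auto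
  then show ?thesis using False by simp
qed (simp add: order_trans[OF _ zero_le_power2])

lemma nsPL_subgradient_bound:
  assumes "nsPL F mu" "0 < mu" "v \<in> subdiff F x"
  shows "F x - (INF y. F y) \<le> ereal (norm v ^ 2 / (2 * mu))"
proof -
  have "infdist 0 (subdiff F x) ^ 2 \<le> norm v ^ 2"
    using infdist_le[OF assms(3), of 0] by (simp add: power_mono infdist_nonneg)
  then have "dist0_sq (subdiff F x) / ereal (2 * mu) \<le> ereal (norm v ^ 2 / (2 * mu))"
    using assms(2,3) by (auto simp: dist0_sq_def divide_right_mono)
  then show ?thesis using assms(1) order_trans by (auto simp: nsPL_def)
qed

locale moreau_setting =
  fixes F :: "'a::{real_inner, complete_space} \<Rightarrow> ereal" and lam :: real and z0 :: 'a
  assumes lam_pos: "0 < lam" and convex: "convex_fun F" and proper: "proper_fun F"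
    and lsc: "lsc_fun F" and z0_min: "\<And>x. F z0 \<le> F x"
begin

abbreviation env :: "'a \<Rightarrow> real" where "env \<equiv> moreau_env F lam"

text \<open>\<open>f\<close> is meaningful only where \<open>F\<close> is finite; it takes the junk value \<open>0\<close> where \<open>F = \<infinity>\<close>.\<close>
definition f :: "'a \<Rightarrow> real" where "f y = real_of_ereal (F y)"

definition Fmin :: real where "Fmin = f z0"

definition obj :: "'a \<Rightarrow> 'a \<Rightarrow> ereal" where
  "obj x y = F y + ereal (norm (y - x)^2 / (2 * lam))"

lemma F_neq_minf: "F y \<noteq> -\<infinity>"
  using proper by (auto simp: proper_fun_def)

lemma ex_F_finite: "\<exists>y. F y \<noteq> \<infinity>"
  using proper by (auto simp: proper_fun_def)

lemma F_eq_f: "F y \<noteq> \<infinity> \<Longrightarrow> F y = ereal (f y)"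
  using F_neq_minf[of y] by (cases "F y") (auto simp: f_def)

lemma F_z0: "F z0 = ereal Fmin"
proof -
  obtain y where "F y \<noteq> \<infinity>" using ex_F_finite by blast
  then have "F z0 \<noteq> \<infinity>" using z0_min[of y] by auto
  then show ?thesis by (simp add: F_eq_f Fmin_def)
qed

lemma Fmin_le_F: "ereal Fmin \<le> F y"
  using z0_min F_z0 by metis

lemma INF_F: "(INF y. F y) = ereal Fmin"
  by (metis F_z0 Fmin_le_F INF_eqI UNIV_I)

lemma f_convex:
  assumes "F a \<noteq> \<infinity>" "F b \<noteq> \<infinity>" "0 \<le> t" "t \<le> 1"
  shows "F ((1 - t) *\<^sub>R a + t *\<^sub>R b) \<noteq> \<infinity>"
    and "f ((1 - t) *\<^sub>R a + t *\<^sub>R b) \<le> (1 - t) * f a + t * f b"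
proof -
  have "F ((1 - t) *\<^sub>R a + t *\<^sub>R b) \<le> ereal (1 - t) * F a + ereal t * F b"
    using convex assms(3,4) by (simp add: convex_fun_def)
  also have "\<dots> = ereal ((1 - t) * f a + t * f b)"
    using F_eq_f[OF assms(1)] F_eq_f[OF assms(2)] by simp
  finally have le: "F ((1 - t) *\<^sub>R a + t *\<^sub>R b) \<le> ereal ((1 - t) * f a + t * f b)" .
  then show fin: "F ((1 - t) *\<^sub>R a + t *\<^sub>R b) \<noteq> \<infinity>" by auto
  show "f ((1 - t) *\<^sub>R a + t *\<^sub>R b) \<le> (1 - t) * f a + t * f b"
    using le F_eq_f[OF fin] by simp
qed

lemma obj_eq: "F y \<noteq> \<infinity> \<Longrightarrow> obj x y = ereal (f y + norm (y - x)^2 / (2 * lam))"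
  by (simp add: obj_def F_eq_f)

lemma Fmin_le_obj: "ereal Fmin \<le> obj x y"
proof -
  have "F y \<le> obj x y" unfolding obj_def using lam_pos by (intro ereal_le_add_self) simp
  then show ?thesis using Fmin_le_F order_trans by blast
qed

lemma env_eq_INF: "ereal (env x) = (INF y. obj x y)"
proof -
  obtain y where "F y \<noteq> \<infinity>" using ex_F_finite by blast
  then have "(INF y. obj x y) \<noteq> \<infinity>"
    using INF_lower[of y UNIV "obj x"] by (auto simp: obj_eq)
  moreover have "(INF y. obj x y) \<noteq> -\<infinity>"
    using INF_greatest[of UNIV "ereal Fmin" "obj x"] Fmin_le_obj by auto
  ultimately show ?thesis
    unfolding moreau_env_def obj_def[symmetric] by (cases "INF y. obj x y") auto
qed

lemma env_le: "F y \<noteq> \<infinity> \<Longrightarrow> env x \<le> f y + norm (y - x)^2 / (2 * lam)"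
  using INF_lower[of y UNIV "obj x"] by (simp add: env_eq_INF[symmetric] obj_eq)

lemma Fmin_le_env: "Fmin \<le> env x"
  using INF_greatest[of UNIV "ereal Fmin" "obj x"] Fmin_le_obj by (simp add: env_eq_INF[symmetric])

lemma near_minimizers_close:
  assumes "F a \<noteq> \<infinity>" "F b \<noteq> \<infinity>"
    and "f a + norm (a - x)^2 / (2 * lam) \<le> env x + ea"
    and "f b + norm (b - x)^2 / (2 * lam) \<le> env x + eb"
  shows "norm (a - b)^2 \<le> 4 * lam * (ea + eb)"
proof -
  define q where "q y = norm (y - x)^2 / (2 * lam)" for y
  define w where "w = (1/2) *\<^sub>R (a + b)"
  have w: "w = (1 - 1/2) *\<^sub>R a + (1/2) *\<^sub>R b" by (simp add: w_def scaleR_add_right)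
  have "F w \<noteq> \<infinity>" and fw: "f w \<le> (1 - 1/2) * f a + (1/2) * f b"
    unfolding w by (intro f_convex assms(1,2); simp)+
  then have "env x \<le> f w + q w" unfolding q_def by (intro env_le)
  moreover have "2 * q w = q a + q b - norm (a - b)^2 / (4 * lam)"
    unfolding q_def w_def norm_midpoint_diff_power2 using lam_pos by (simp add: field_simps)
  moreover have "2 * f w \<le> f a + f b" using fw by simp
  ultimately have "norm (a - b)^2 / (4 * lam) \<le> ea + eb"
    using assms(3,4)[folded q_def] by linarith
  then show ?thesis using lam_pos by (simp add: field_simps)
qed

lemma minimizing_sequence_Cauchy:
  assumes aF: "\<And>n. F (a n) \<noteq> \<infinity>"
    and a: "\<And>n. f (a n) + norm (a n - x)^2 / (2 * lam) \<le> env x + inverse (real (Suc n))"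
  shows "Cauchy a"
proof (rule metric_CauchyI)
  fix e :: real assume "0 < e"
  obtain N where N: "inverse (real (Suc N)) < e^2 / (8 * lam)"
    using reals_Archimedean[of "e^2 / (8 * lam)"] \<open>0 < e\<close> lam_pos by auto
  have "dist (a n) (a k) < e" if "N \<le> n" "N \<le> k" for n k
  proof -
    have "inverse (real (Suc n)) \<le> inverse (real (Suc N))" "inverse (real (Suc k)) \<le> inverse (real (Suc N))"
      using that by (simp_all add: le_imp_inverse_le)
    then have "norm (a n - a k)^2 \<le> 4 * lam * (2 * inverse (real (Suc N)))"
      using near_minimizers_close[OF aF aF a a, of n k] lam_pos by (smt (verit) mult_left_mono)
    also have "\<dots> < e^2" using N lam_pos by (simp add: field_simps)
    finally show ?thesis using \<open>0 < e\<close> by (simp add: dist_norm power_less_imp_less_base)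
  qed
  then show "\<exists>M. \<forall>m\<ge>M. \<forall>n\<ge>M. dist (a m) (a n) < e" by blast
qed

lemma prox_exists: "\<exists>p. F p \<noteq> \<infinity> \<and> (\<forall>y. obj x p \<le> obj x y)"
proof -
  define q where "q y = norm (y - x)^2 / (2 * lam)" for y
  have "\<exists>y. F y \<noteq> \<infinity> \<and> f y + q y \<le> env x + inverse (real (Suc n))" for n
  proof -
    have "(INF y. obj x y) < ereal (env x + inverse (real (Suc n)))"
      by (simp flip: env_eq_INF)
    then obtain y where "obj x y < ereal (env x + inverse (real (Suc n)))" by (auto simp: INF_less_iff)
    moreover from this have "F y \<noteq> \<infinity>" by (auto simp: obj_def)
    ultimately show ?thesis by (auto simp: obj_eq q_def)
  qed
  then obtain a where aF: "\<And>n. F (a n) \<noteq> \<infinity>"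
    and a: "\<And>n. f (a n) + q (a n) \<le> env x + inverse (real (Suc n))"
    by metis
  obtain p where p: "a \<longlonglongrightarrow> p"
    using minimizing_sequence_Cauchy[OF aF a[unfolded q_def]] Cauchy_convergent_iff convergent_def
    by blast
  have bound: "F (a n) \<le> ereal (env x + inverse (real (Suc n)) - q (a n))" for n
    using a[of n] F_eq_f[OF aF[of n]] by simp
  have "(\<lambda>n. env x + inverse (real (Suc n)) - q (a n)) \<longlonglongrightarrow> env x + 0 - q p"
    unfolding q_def using lam_pos by (intro tendsto_intros LIMSEQ_inverse_real_of_nat p) auto
  from lsc_fun_le_lim[OF lsc p bound this] have Fp: "F p \<le> ereal (env x - q p)" by simp
  then have pF: "F p \<noteq> \<infinity>" by auto
  have "obj x p \<le> obj x y" for y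
  proof -
    have "obj x p \<le> ereal (env x)" using Fp by (simp add: obj_eq[OF pF] F_eq_f[OF pF] q_def)
    also have "\<dots> \<le> obj x y" unfolding env_eq_INF by (rule INF_lower) simp
    finally show ?thesis .
  qed
  with pF show ?thesis by blast
qed

lemma prox_subgradient:
  assumes pF: "F p \<noteq> \<infinity>" and p_min: "\<And>y. obj x p \<le> obj x y"
  shows "(1 / lam) *\<^sub>R (x - p) \<in> subdiff F p"
  unfolding subdiff_def
proof (intro CollectI conjI allI pF)
  fix y
  show "F p + ereal (((1 / lam) *\<^sub>R (x - p)) \<bullet> (y - p)) \<le> F y"
  proof (cases "F y = \<infinity>")
    case False
    \<comment> \<open>Compare \<open>p\<close> with the points \<open>(1 - t) p + t y\<close> of the segment and let \<open>t \<rightarrow> 0\<close>.\<close>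
    define ip where "ip = (p - x) \<bullet> (y - p)"
    have "f p - f y \<le> ip / lam + t * (norm (y - p)^2 / (2 * lam))" if t: "0 < t" "t \<le> 1" for t
    proof -
      define w where "w = (1 - t) *\<^sub>R p + t *\<^sub>R y"
      have "F w \<noteq> \<infinity>" and fw: "f w \<le> (1 - t) * f p + t * f y"
        unfolding w_def using f_convex[OF pF False] t by auto
      then have "f p + norm (p - x)^2 / (2 * lam) \<le> f w + norm (w - x)^2 / (2 * lam)"
        using p_min[of w] by (simp add: obj_eq pF)
      moreover have "norm (w - x)^2 / (2 * lam)
          = norm (p - x)^2 / (2 * lam) + t * (ip / lam + t * (norm (y - p)^2 / (2 * lam)))"
      proof -
        have wx: "w - x = (p - x) + t *\<^sub>R (y - p)" by (simp add: w_def algebra_simps)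
        have "norm (w - x)^2 = norm (p - x)^2 + 2 * t * ip + t^2 * norm (y - p)^2"
          unfolding wx norm_add_power2 by (simp add: ip_def power_mult_distrib)
        then show ?thesis using lam_pos by (simp add: field_simps power2_eq_square)
      qed
      ultimately have "t * (f p - f y) \<le> t * (ip / lam + t * (norm (y - p)^2 / (2 * lam)))"
        using fw by (simp add: algebra_simps)
      then show ?thesis using t by simp
    qed
    then have "f p - f y \<le> ip / lam" by (rule le_of_forall_le_add_small_multiple)
    moreover have "((1 / lam) *\<^sub>R (x - p)) \<bullet> (y - p) = - (ip / lam)"
      using lam_pos by (simp add: ip_def inner_diff_left field_simps)
    ultimately show ?thesis using F_eq_f[OF pF] F_eq_f[OF False] by simp
  qed simp
qed

lemma ex_prox_subgradient: "\<exists>p. (1 / lam) *\<^sub>R (x - p) \<in> subdiff F p"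
  using prox_exists[of x] prox_subgradient by blast

lemma prox_quadratic_growth:
  assumes sub: "(1 / lam) *\<^sub>R (x - p) \<in> subdiff F p" and yF: "F y \<noteq> \<infinity>"
  shows "f p + norm (p - x)^2 / (2 * lam) + norm (y - p)^2 / (2 * lam) \<le> f y + norm (y - x)^2 / (2 * lam)"
proof -
  have pF: "F p \<noteq> \<infinity>" using sub by (simp add: subdiff_def)
  have "F p + ereal (((1 / lam) *\<^sub>R (x - p)) \<bullet> (y - p)) \<le> F y" using sub by (simp add: subdiff_def)
  moreover have "(x - p) \<bullet> (y - p) = - ((y - p) \<bullet> (p - x))"
    by (metis inner_commute inner_minus_left minus_diff_eq)
  ultimately have "f p - ((y - p) \<bullet> (p - x)) / lam \<le> f y"
    using F_eq_f[OF pF] F_eq_f[OF yF] by simp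
  moreover have "norm (y - x)^2 / (2 * lam)
      = norm (y - p)^2 / (2 * lam) + ((y - p) \<bullet> (p - x)) / lam + norm (p - x)^2 / (2 * lam)"
    using norm_add_power2[of "y - p" "p - x"] lam_pos by (simp add: field_simps)
  ultimately show ?thesis by linarith
qed

lemma env_at_prox:
  assumes sub: "(1 / lam) *\<^sub>R (x - p) \<in> subdiff F p"
  shows "env x = f p + norm (p - x)^2 / (2 * lam)"
proof (rule antisym)
  show "env x \<le> f p + norm (p - x)^2 / (2 * lam)"
    using sub by (intro env_le) (simp add: subdiff_def)
  have "ereal (f p + norm (p - x)^2 / (2 * lam)) \<le> obj x y" for y
  proof (cases "F y = \<infinity>")
    case False
    have "0 \<le> norm (y - p)^2 / (2 * lam)" using lam_pos by simp
    then show ?thesis using prox_quadratic_growth[OF sub False] by (simp add: obj_eq False)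
  qed (simp add: obj_def)
  then have "ereal (f p + norm (p - x)^2 / (2 * lam)) \<le> ereal (env x)"
    unfolding env_eq_INF by (rule INF_greatest)
  then show "f p + norm (p - x)^2 / (2 * lam) \<le> env x" by simp
qed

lemma env_z0: "env z0 = Fmin"
  using env_le[of z0 z0] Fmin_le_env[of z0] F_z0 by (simp add: Fmin_def)

lemma INF_env: "(INF y. env y) = Fmin"
proof (rule cInf_eq_minimum)
  show "Fmin \<in> range env" by (metis env_z0 rangeI)
qed (auto intro: Fmin_le_env)

lemma env_le_linearization:
  assumes sub: "(1 / lam) *\<^sub>R (x - p) \<in> subdiff F p"
  shows "env y \<le> env x + ((1 / lam) *\<^sub>R (x - p)) \<bullet> (y - x) + norm (y - x)^2 / (2 * lam)"
proof -
  have "env y \<le> f p + norm (p - y)^2 / (2 * lam)"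
    using sub by (intro env_le) (simp add: subdiff_def)
  moreover have "norm (p - y)^2 / (2 * lam)
      = norm (p - x)^2 / (2 * lam) + ((1 / lam) *\<^sub>R (x - p)) \<bullet> (y - x) + norm (y - x)^2 / (2 * lam)"
  proof -
    have "norm (p - y)^2 = norm (p - x)^2 + 2 * ((p - x) \<bullet> (x - y)) + norm (y - x)^2"
      using norm_add_power2[of "p - x" "x - y"] by (simp add: norm_minus_commute)
    moreover have "(x - p) \<bullet> (y - x) = (p - x) \<bullet> (x - y)"
      by (metis inner_minus_left inner_minus_right minus_diff_eq)
    then have "((1 / lam) *\<^sub>R (x - p)) \<bullet> (y - x) = ((p - x) \<bullet> (x - y)) / lam" by simp
    ultimately show ?thesis using lam_pos by (simp add: field_simps)
  qed
  ultimately show ?thesis using env_at_prox[OF sub] by linarith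
qed

lemma prox_gradient_monotone:
  assumes "(1 / lam) *\<^sub>R (x - p) \<in> subdiff F p" and "(1 / lam) *\<^sub>R (y - q) \<in> subdiff F q"
  shows "0 \<le> ((1 / lam) *\<^sub>R (y - q) - (1 / lam) *\<^sub>R (x - p)) \<bullet> (y - x)"
proof -
  define u where "u = (1 / lam) *\<^sub>R (x - p)"
  define v where "v = (1 / lam) *\<^sub>R (y - q)"
  have "y - x = lam *\<^sub>R (v - u) + (q - p)"
    using lam_pos by (simp add: u_def v_def algebra_simps)
  then have "(v - u) \<bullet> (y - x) = lam * ((v - u) \<bullet> (v - u)) + (v - u) \<bullet> (q - p)"
    by (simp add: inner_add_right)
  moreover have "0 \<le> (v - u) \<bullet> (q - p)"
    using subdiff_monotone[OF F_neq_minf] assms by (simp add: u_def v_def)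
  ultimately show ?thesis using lam_pos by (simp add: u_def v_def)
qed

lemma env_quadratic_bound:
  assumes sub: "(1 / lam) *\<^sub>R (x - p) \<in> subdiff F p"
  shows "\<bar>env y - env x - ((1 / lam) *\<^sub>R (x - p)) \<bullet> (y - x)\<bar> \<le> 1 / (2 * lam) * norm (y - x)^2"
proof -
  \<comment> \<open>The lower bound comes from the linearization at \<open>y\<close> and monotonicity of the gradients.\<close>
  obtain q where subq: "(1 / lam) *\<^sub>R (y - q) \<in> subdiff F q" using ex_prox_subgradient by blast
  have "env x \<le> env y + ((1 / lam) *\<^sub>R (y - q)) \<bullet> (x - y) + norm (x - y)^2 / (2 * lam)"
    by (rule env_le_linearization[OF subq])
  moreover have "((1 / lam) *\<^sub>R (y - q)) \<bullet> (x - y) = - (((1 / lam) *\<^sub>R (y - q)) \<bullet> (y - x))"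
    by (metis inner_minus_right minus_diff_eq)
  moreover have "((1 / lam) *\<^sub>R (x - p)) \<bullet> (y - x) \<le> ((1 / lam) *\<^sub>R (y - q)) \<bullet> (y - x)"
    using prox_gradient_monotone[OF sub subq] by (simp add: inner_diff_left)
  ultimately show ?thesis
    using env_le_linearization[OF sub, of y] by (simp add: norm_minus_commute abs_le_iff)
qed

lemma env_has_derivative:
  assumes "(1 / lam) *\<^sub>R (x - p) \<in> subdiff F p"
  shows "(env has_derivative (\<lambda>h. ((1 / lam) *\<^sub>R (x - p)) \<bullet> h)) (at x)"
  using env_quadratic_bound[OF assms] by (rule has_derivative_inner_of_quadratic_bound)

lemma PL_env_of_nsPL:
  assumes mu: "0 < mu" and ns: "nsPL F mu"
  shows "PL env (mu / (lam * mu + 1))"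
  unfolding PL_def
proof (intro conjI allI impI)
  fix x
  obtain p where "(1 / lam) *\<^sub>R (x - p) \<in> subdiff F p" using ex_prox_subgradient by blast
  then show "env differentiable (at x)" by (blast intro: differentiableI env_has_derivative)
next
  show "\<exists>z. \<forall>x. env z \<le> env x" using env_z0 Fmin_le_env by metis
next
  fix x g assume grad: "(env has_derivative (\<lambda>h. g \<bullet> h)) (at x)"
  obtain p where sub: "(1 / lam) *\<^sub>R (x - p) \<in> subdiff F p" using ex_prox_subgradient by blast
  have g: "g = (1 / lam) *\<^sub>R (x - p)"
    using has_derivative_inner_unique[OF grad env_has_derivative[OF sub]] .
  have pF: "F p \<noteq> \<infinity>" using sub by (simp add: subdiff_def)
  have "f p - Fmin \<le> norm g ^ 2 / (2 * mu)"
    using nsPL_subgradient_bound[OF ns mu sub] by (simp add: g INF_F F_eq_f[OF pF])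
  moreover have "norm (p - x)^2 / (2 * lam) = lam * norm g ^ 2 / 2"
    using lam_pos by (simp add: g norm_minus_commute power2_eq_square)
  ultimately have "env x - Fmin \<le> norm g ^ 2 / (2 * mu) + lam * norm g ^ 2 / 2"
    using env_at_prox[OF sub] by linarith
  also have "\<dots> = norm g ^ 2 / (2 * (mu / (lam * mu + 1)))"
    using mu lam_pos by (simp add: field_simps)
  finally show "env x - (INF y. env y) \<le> norm g ^ 2 / (2 * (mu / (lam * mu + 1)))"
    by (simp add: INF_env)
qed

lemma nsPL_of_PL_env:
  assumes mu: "0 < mu" and pl: "PL env mu"
  shows "nsPL F (mu / 4)"
  unfolding nsPL_def
proof
  fix x
  show "F x - (INF y. F y) \<le> dist0_sq (subdiff F x) / ereal (2 * (mu / 4))"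
  proof (cases "subdiff F x = {}")
    case True
    then show ?thesis using mu by (simp add: dist0_sq_def)
  next
    case False
    then have xF: "F x \<noteq> \<infinity>" by (auto simp: subdiff_def)
    have "2 * mu * (f x - Fmin) \<le> dist 0 v ^ 2" if v: "v \<in> subdiff F x" for v
    proof -
      \<comment> \<open>\<open>v \<in> \<partial>F(x)\<close> says exactly that \<open>x\<close> is the proximal point of \<open>x + \<lambda>v\<close>.\<close>
      define y where "y = x + lam *\<^sub>R v"
      have sub: "(1 / lam) *\<^sub>R (y - x) \<in> subdiff F x" using v lam_pos by (simp add: y_def)
      have "(env has_derivative (\<lambda>h. v \<bullet> h)) (at y)"
        using env_has_derivative[OF sub] lam_pos by (simp add: y_def)
      then have "env y - Fmin \<le> norm v ^ 2 / (2 * mu)" using pl by (simp add: PL_def INF_env)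
      then have "2 * mu * (env y - Fmin) \<le> norm v ^ 2" using mu by (simp add: field_simps)
      moreover have "2 * mu * (f x - Fmin) \<le> 2 * mu * (env y - Fmin)"
        using env_at_prox[OF sub] lam_pos mu by (intro mult_left_mono) auto
      ultimately show ?thesis by (simp add: dist_norm)
    qed
    then have "2 * mu * (f x - Fmin) \<le> infdist 0 (subdiff F x) ^ 2"
      by (rule le_infdist_power2[OF False])
    then have "f x - Fmin \<le> infdist 0 (subdiff F x) ^ 2 / (2 * mu)"
      using mu by (simp add: pos_le_divide_eq mult.commute)
    also have "\<dots> \<le> infdist 0 (subdiff F x) ^ 2 / (2 * (mu / 4))"
      using mu by (intro divide_left_mono) auto
    finally have "f x - Fmin \<le> infdist 0 (subdiff F x) ^ 2 / (2 * (mu / 4))" .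
    then show ?thesis using False mu by (simp add: dist0_sq_def INF_F F_eq_f[OF xF])
  qed
qed

end

theorem proposition4p1:
  fixes F :: "'a::{real_inner, complete_space} \<Rightarrow> ereal" and lam :: real
  assumes "lam > 0"
    and "convex_fun F" and "proper_fun F" and "lsc_fun F"
    and "\<exists>z. \<forall>x. F z \<le> F x"
  shows "(\<forall>mu>0. nsPL F mu \<longrightarrow> PL (moreau_env F lam) (mu / (lam * mu + 1)))
       \<and> (\<forall>mu>0. PL (moreau_env F lam) mu \<longrightarrow> nsPL F (mu / 4))"
proof -
  obtain z0 where "\<forall>x. F z0 \<le> F x" using assms(5) by blast
  then interpret moreau_setting F lam z0 using assms(1-4) by unfold_locales auto
  show ?thesis using PL_env_of_nsPL nsPL_of_PL_env by blast
qed

end
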